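(* For every triangle $ABC$ with $b=c>a$, we have $AX_{25}<AX_{24}<AX_{14}$; that is, in the isosceles order, $X_{25}\prec X_{24}\prec X_{14}$.
   Context: $X_n$ denotes the $n$-th triangle center listed in Kimberling's Encyclopedia of Triangle Centers (ETC), given by barycentric coordinates in terms of $a=BC$, $b=CA$, $c=AB$. The isosceles order: $P\prec Q$ if $P$ is closer to $A$ than $Q$ in every isosceles triangle $ABC$ with $b=c>a$. *)

theory Defs
  imports Complex_Main
begin

type_synonym bary = "real \<times> real \<times> real"

definition cyclic_bary :: "(real \<Rightarrow> real \<Rightarrow> real \<Rightarrow> real) \<Rightarrow> real \<Rightarrow> real \<Rightarrow> real \<Rightarrow> bary" where
  "cyclic_bary f a b c = (f a b c, f b c a, f c a b)"

definition tri_area :: "real \<Rightarrow> real \<Rightarrow> real \<Rightarrow> real" where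
  "tri_area a b c = sqrt ((a+b+c) * (-a+b+c) * (a-b+c) * (a+b-c)) / 4"

definition X14 :: "real \<Rightarrow> real \<Rightarrow> real \<Rightarrow> bary" where
  "X14 = cyclic_bary (\<lambda>a b c. a^4 - 2*(b^2 - c^2)^2
           + a^2 * (b^2 + c^2 - 4 * sqrt 3 * tri_area a b c))"

text \<open>ETC X(24): a^2 (a^4+b^4+c^4-2a^2b^2-2a^2c^2) / (b^2+c^2-a^2)
  (trilinears sec A cos 2A).\<close>
definition X24 :: "real \<Rightarrow> real \<Rightarrow> real \<Rightarrow> bary" where
  "X24 = cyclic_bary (\<lambda>a b c. a^2 * (a^4 + b^4 + c^4 - 2*a^2*b^2 - 2*a^2*c^2) / (b^2 + c^2 - a^2))"

definition X25 :: "real \<Rightarrow> real \<Rightarrow> real \<Rightarrow> bary" where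
  "X25 = cyclic_bary (\<lambda>a b c. a^2 / (b^2 + c^2 - a^2))"

text \<open>Distance from vertex A to the point with barycentrics (x:y:z) in a triangle
  with side lengths a = BC, b = CA, c = AB. With normalized (u,v,w),
  AP = v AB + w AC, so |AP|^2 = v^2 c^2 + w^2 b^2 + 2 v w (AB . AC),
  where AB . AC = (b^2+c^2-a^2)/2.\<close>
definition dist_from_A :: "bary \<Rightarrow> real \<Rightarrow> real \<Rightarrow> real \<Rightarrow> real" where
  "dist_from_A P a b c =
     (case P of (x, y, z) \<Rightarrow>
        let s = x + y + z; v = y / s; w = z / s
        in sqrt (v^2 * c^2 + w^2 * b^2 + v * w * (b^2 + c^2 - a^2)))"

end

theory Submission
  imports Defs
begin

text \<open>When b = c the three centers lie on the symmetry axis, so their barycentrics have the form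
  (x : y : y), and the distance from A is y/(x + 2y) times sqrt(4b^2 - a^2), twice the altitude.
  In the variables s = a^2 and e = b^2 - a^2 > 0, together with k = 4 sqrt 3 \<Delta> for X14,
  these ratios are rational functions whose cross-multiplied differences are polynomials with
  positive coefficients once the irrational k, which enters them linearly, is eliminated by
  squaring, using k^2 = 3s(3s + 4e).\<close>

lemma dist_from_A_on_axis:
  "dist_from_A (x, y, y) a b b = \<bar>y / (x + 2*y)\<bar> * sqrt (4*b^2 - a^2)"
proof -
  define v where "v = y / (x + 2*y)"
  have "x + y + y = x + 2*y" by simp
  then have "dist_from_A (x, y, y) a b b = sqrt (v^2 * b^2 + v^2 * b^2 + v * v * (b^2 + b^2 - a^2))"
    by (simp only: dist_from_A_def Let_def prod.case v_def)
  also have "\<dots> = sqrt (v^2 * (4*b^2 - a^2))"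
    by (simp add: power2_eq_square algebra_simps)
  finally show ?thesis
    by (simp add: real_sqrt_mult v_def)
qed

lemma tri_area_isosceles:
  "tri_area a b b = \<bar>a\<bar> * sqrt (4*b^2 - a^2) / 4"
  "tri_area b b a = tri_area a b b" "tri_area b a b = tri_area a b b"
proof -
  have "(a+b+b) * (-a+b+b) * (a-b+b) * (a+b-b) = a^2 * (4*b^2 - a^2)"
    by (simp add: power2_eq_square algebra_simps)
  then show "tri_area a b b = \<bar>a\<bar> * sqrt (4*b^2 - a^2) / 4"
    by (simp add: tri_area_def real_sqrt_mult)
  show "tri_area b b a = tri_area a b b" "tri_area b a b = tri_area a b b"
    by (simp_all add: tri_area_def algebra_simps)
qed

text \<open>The value y/(x + 2y) for X25, X24 and X14 in a triangle with a^2 = s and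
  b^2 = c^2 = s + e; the argument k of the last one stands for 4 sqrt 3 \<Delta>.\<close>

definition axis_coord_X25 :: "real \<Rightarrow> real \<Rightarrow> real" where
  "axis_coord_X25 s e = (s + e) * (s + 2*e) / (s^2 + 2 * (s + e) * (s + 2*e))"

definition axis_coord_X24 :: "real \<Rightarrow> real \<Rightarrow> real" where
  "axis_coord_X24 s e = (s + e) * (s + 2*e)^2 / (3*s^3 + 10*s^2*e + 14*s*e^2 + 8*e^3)"

definition axis_coord_X14 :: "real \<Rightarrow> real \<Rightarrow> real \<Rightarrow> real" where
  "axis_coord_X14 s e k = ((s + e) * k - s * (3*s + 5*e)) / (k * (3*s + 2*e) - 3 * s * (3*s + 4*e))"

lemma dist_from_A_X25_isosceles:
  assumes "a^2 = s" "b^2 = s + e" "s \<noteq> 0" "s + 2*e \<noteq> 0"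
  shows "dist_from_A (X25 a b b) a b b = \<bar>axis_coord_X25 s e\<bar> * sqrt (3*s + 4*e)"
proof -
  define x where "x = s / (s + 2*e)"
  define y where "y = (s + e) / s"
  have "X25 a b b = (x, y, y)"
    unfolding X25_def cyclic_bary_def assms(1,2) x_def y_def by simp
  moreover have "x + 2*y = (s^2 + 2 * (s + e) * (s + 2*e)) / (s * (s + 2*e))"
    unfolding x_def y_def using assms(3,4) by (simp add: field_simps power2_eq_square)
  then have "y / (x + 2*y) = axis_coord_X25 s e"
    unfolding axis_coord_X25_def y_def using assms(3) by simp
  ultimately show ?thesis
    using assms by (simp add: dist_from_A_on_axis)
qed

lemma dist_from_A_X24_isosceles:
  assumes "a^2 = s" "b^2 = s + e" "s \<noteq> 0" "s + 2*e \<noteq> 0"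
  shows "dist_from_A (X24 a b b) a b b = \<bar>axis_coord_X24 s e\<bar> * sqrt (3*s + 4*e)"
proof -
  define x where "x = s * (2*e^2 - s^2) / (s + 2*e)"
  define y where "y = - ((s + e) * (s + 2*e))"
  define m where "m = 3*s^3 + 10*s^2*e + 14*s*e^2 + 8*e^3"
  have "a^4 = s^2" "b^4 = (s + e)^2"
    using assms(1,2) power_mult[of a 2 2] power_mult[of b 2 2] by simp_all
  then have "X24 a b b = (x, y, y)"
    unfolding X24_def cyclic_bary_def assms(1,2) x_def y_def
    using assms(3,4) by (simp add: field_simps power2_eq_square)
  moreover have "x + 2*y = - (m / (s + 2*e))"
    unfolding x_def y_def m_def using assms(4) by (simp add: field_simps power2_eq_square power3_eq_cube)
  then have "y / (x + 2*y) = axis_coord_X24 s e"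
    unfolding axis_coord_X24_def y_def m_def[symmetric]
    by (simp only: minus_divide_divide divide_divide_eq_right power2_eq_square mult.assoc)
  ultimately show ?thesis
    using assms by (simp add: dist_from_A_on_axis)
qed

lemma dist_from_A_X14_isosceles:
  assumes "a^2 = s" "b^2 = s + e"
  shows "dist_from_A (X14 a b b) a b b
      = \<bar>axis_coord_X14 s e (4 * sqrt 3 * tri_area a b b)\<bar> * sqrt (3*s + 4*e)"
proof -
  define k where "k = 4 * sqrt 3 * tri_area a b b"
  define y where "y = - ((s + e) * k - s * (3*s + 5*e))"
  define x where "x = - (k * (3*s + 2*e) - 3 * s * (3*s + 4*e)) - 2 * y"
  have "a^4 = s^2" "b^4 = (s + e)^2"
    using assms(1,2) power_mult[of a 2 2] power_mult[of b 2 2] by simp_all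
  then have "X14 a b b = (x, y, y)"
    unfolding X14_def cyclic_bary_def tri_area_isosceles(2,3) assms(1,2) k_def[symmetric]
    by (simp add: x_def y_def algebra_simps power2_eq_square)
  moreover have "y / (x + 2*y) = axis_coord_X14 s e k"
    unfolding axis_coord_X14_def x_def y_def by (simp only: minus_divide_divide diff_add_cancel)
  ultimately show ?thesis
    using assms by (simp add: dist_from_A_on_axis k_def)
qed

lemma axis_coord_X25_pos:
  fixes s e :: real
  assumes "0 < s" "0 < e"
  shows "0 < axis_coord_X25 s e"
  unfolding axis_coord_X25_def using assms
  by (intro divide_pos_pos add_pos_pos mult_pos_pos zero_less_power) simp_all

lemma axis_coord_X25_less_X24:
  fixes s e :: real
  assumes "0 < s" "0 < e"
  shows "axis_coord_X25 s e < axis_coord_X24 s e"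
proof -
  define m where "m = 3*s^3 + 10*s^2*e + 14*s*e^2 + 8*e^3"
  have "0 < m" "0 < s^2 + 2 * (s + e) * (s + 2*e)"
    unfolding m_def using assms by (intro add_pos_pos mult_pos_pos zero_less_power; simp)+
  moreover have "(s + e) * (s + 2*e)^2 * (s^2 + 2 * (s + e) * (s + 2*e)) - (s + e) * (s + 2*e) * m
      = 2 * s * e * (s + e)^2 * (s + 2*e)"
    unfolding m_def by algebra
  moreover have "0 < 2 * s * e * (s + e)^2 * (s + 2*e)"
    using assms by simp
  ultimately have "(s + e) * (s + 2*e) * m < (s + e) * (s + 2*e)^2 * (s^2 + 2 * (s + e) * (s + 2*e))"
    by linarith
  with \<open>0 < m\<close> \<open>0 < s^2 + 2 * (s + e) * (s + 2*e)\<close> show ?thesis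
    unfolding axis_coord_X25_def axis_coord_X24_def m_def[symmetric] by (simp add: divide_simps)
qed

lemma axis_coord_X24_less_X14:
  fixes s e k :: real
  assumes "0 < s" "0 < e" "0 < k" and k2: "k^2 = 3 * s * (3*s + 4*e)"
  shows "axis_coord_X24 s e < axis_coord_X14 s e k"
proof -
  define m where "m = 3*s^3 + 10*s^2*e + 14*s*e^2 + 8*e^3"
  define q where "q = 6*s^3 + 20*s^2*e + 19*s*e^2 + 4*e^3"
  have "0 < m" "0 < q"
    unfolding m_def q_def using assms by (intro add_pos_pos mult_pos_pos zero_less_power; simp)+
  have "k^2 < (3*s + 2*e)^2"
    using assms by (simp add: k2 power2_eq_square algebra_simps)
  then have "k < 3*s + 2*e"
    by (rule power2_less_imp_less) (use assms in simp)
  then have denominator_pos: "3 * s * (3*s + 4*e) < k * (3*s + 2*e)"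
    using assms(3) by (simp add: k2[symmetric] power2_eq_square)
  have "(k * (s + e) * (2*s + 3*e))^2 < q^2"
  proof -
    have "q^2 - (k * (s + e) * (2*s + 3*e))^2
        = e * (12*s^5 + 55*s^4*e + 94*s^3*e^2 + 80*s^2*e^3 + 44*s*e^4 + 16*e^5)"
      unfolding power_mult_distrib k2 q_def by algebra
    moreover have "0 < e * (12*s^5 + 55*s^4*e + 94*s^3*e^2 + 80*s^2*e^3 + 44*s*e^4 + 16*e^5)"
      using assms by (intro add_pos_pos mult_pos_pos zero_less_power; simp)+
    ultimately show ?thesis
      by linarith
  qed
  then have "k * (s + e) * (2*s + 3*e) < q"
    by (rule power2_less_imp_less) (use \<open>0 < q\<close> in simp)
  then have "0 < 2 * s * e * (q - k * (s + e) * (2*s + 3*e))"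
    using assms by simp
  moreover have "((s + e) * k - s * (3*s + 5*e)) * m - (s + e) * (s + 2*e)^2 * (k * (3*s + 2*e) - 3 * s * (3*s + 4*e))
      = 2 * s * e * (q - k * (s + e) * (2*s + 3*e))"
    unfolding m_def q_def by algebra
  ultimately have "(s + e) * (s + 2*e)^2 * (k * (3*s + 2*e) - 3 * s * (3*s + 4*e))
      < ((s + e) * k - s * (3*s + 5*e)) * m"
    by linarith
  then show ?thesis
    unfolding axis_coord_X24_def axis_coord_X14_def m_def[symmetric]
    using \<open>0 < m\<close> denominator_pos by (simp add: divide_simps)
qed

theorem theorem3p6:
  fixes a b c :: real
  assumes "a > 0" and "b = c" and "b > a"
  shows "dist_from_A (X25 a b c) a b c < dist_from_A (X24 a b c) a b c
       \<and> dist_from_A (X24 a b c) a b c < dist_from_A (X14 a b c) a b c"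
proof -
  define s e k where "s = a^2" and "e = b^2 - a^2" and "k = 4 * sqrt 3 * tri_area a b b"
  have sides: "a^2 = s" "b^2 = s + e"
    by (simp_all add: s_def e_def)
  have "0 < s" "0 < e"
    using assms by (simp_all add: s_def e_def power_strict_mono)
  have "0 < k" "k^2 = 3 * s * (3*s + 4*e)"
    using \<open>0 < s\<close> \<open>0 < e\<close> assms(1)
    by (simp_all add: k_def tri_area_isosceles(1) sides power_mult_distrib)
  have "0 < axis_coord_X25 s e" "axis_coord_X25 s e < axis_coord_X24 s e"
    "axis_coord_X24 s e < axis_coord_X14 s e k"
    using \<open>0 < s\<close> \<open>0 < e\<close> \<open>0 < k\<close> \<open>k^2 = 3 * s * (3*s + 4*e)\<close>
    by (simp_all add: axis_coord_X25_pos axis_coord_X25_less_X24 axis_coord_X24_less_X14)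
  moreover have "0 < sqrt (3*s + 4*e)"
    using \<open>0 < s\<close> \<open>0 < e\<close> by simp
  ultimately show ?thesis
    using \<open>0 < s\<close> \<open>0 < e\<close>
    by (simp add: \<open>b = c\<close>[symmetric] k_def[symmetric] sides dist_from_A_X25_isosceles
        dist_from_A_X24_isosceles dist_from_A_X14_isosceles)
qed
end
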